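(* Let $\tau$ be an infinite cardinal and let $\mathcal U$ be a uniformity on a space $X$ with $w(\mathcal U)\le\tau$. There is no continuous and effective action on $X$ of a topological group $G$ with $\psi(G)>\tau$ for which $\mathcal U$ is an equiuniformity on $X$.
   Context: All spaces are Tychonoff. Uniformities are families of open covers; $w(\mathcal U)$ is the least cardinality of a base. For a continuous action of $G$ on $X$, $\mathcal U$ is an equiuniformity if it is saturated ($gu\in\mathcal U$ for $g\in G,u\in\mathcal U$) and bounded (for each $u\in\mathcal U$ there exist a neighborhood $O$ of the unit and $v\in\mathcal U$ with $\{OV:V\in v\}$ refining $u$). An action is effective if only the unit fixes every point. $\psi(G)$ is the pseudocharacter of $G$. *)

theory Defs
  imports "HOL-Analysis.Analysis" "HOL-Algebra.Group"
begin

definition tychonoff_space :: "'a topology \<Rightarrow> bool" where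
  "tychonoff_space X \<longleftrightarrow> t1_space X \<and> completely_regular_space X"

definition open_cover :: "'a topology \<Rightarrow> 'a set set \<Rightarrow> bool" where
  "open_cover X u \<longleftrightarrow> (\<forall>U\<in>u. openin X U) \<and> \<Union>u = topspace X"

definition refines :: "'a set set \<Rightarrow> 'a set set \<Rightarrow> bool" where
  "refines v u \<longleftrightarrow> (\<forall>V\<in>v. \<exists>U\<in>u. V \<subseteq> U)"

definition cover_star :: "'a set \<Rightarrow> 'a set set \<Rightarrow> 'a set" where
  "cover_star A u = \<Union>{U\<in>u. U \<inter> A \<noteq> {}}"

definition star_refines :: "'a set set \<Rightarrow> 'a set set \<Rightarrow> bool" where
  "star_refines v u \<longleftrightarrow> (\<forall>V\<in>v. \<exists>U\<in>u. cover_star V v \<subseteq> U)"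

definition cover_uniformity :: "'a topology \<Rightarrow> 'a set set set \<Rightarrow> bool" where
  "cover_uniformity X \<U> \<longleftrightarrow>
     \<U> \<noteq> {} \<and>
     (\<forall>u\<in>\<U>. open_cover X u) \<and>
     (\<forall>u\<in>\<U>. \<forall>v. open_cover X v \<and> refines u v \<longrightarrow> v \<in> \<U>) \<and>
     (\<forall>u\<in>\<U>. \<forall>v\<in>\<U>. \<exists>w\<in>\<U>. refines w u \<and> refines w v) \<and>
     (\<forall>u\<in>\<U>. \<exists>v\<in>\<U>. star_refines v u) \<and>
     (\<forall>W x. openin X W \<and> x \<in> W \<longrightarrow> (\<exists>u\<in>\<U>. cover_star {x} u \<subseteq> W))"

definition uniformity_base :: "'a set set set \<Rightarrow> 'a set set set \<Rightarrow> bool" where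
  "uniformity_base \<U> \<B> \<longleftrightarrow> \<B> \<subseteq> \<U> \<and> (\<forall>u\<in>\<U>. \<exists>v\<in>\<B>. refines v u)"

definition uniform_weight_le :: "'a set set set \<Rightarrow> 'k set \<Rightarrow> bool" where
  "uniform_weight_le \<U> T \<longleftrightarrow> (\<exists>\<B>. uniformity_base \<U> \<B> \<and> \<B> \<lesssim> T)"

definition topological_group :: "('g, 'b) monoid_scheme \<Rightarrow> 'g topology \<Rightarrow> bool" where
  "topological_group G TG \<longleftrightarrow>
     group G \<and> topspace TG = carrier G \<and>
     continuous_map (prod_topology TG TG) TG (\<lambda>(x, y). x \<otimes>\<^bsub>G\<^esub> y) \<and>
     continuous_map TG TG (\<lambda>x. inv\<^bsub>G\<^esub> x)"

definition pseudochar_at_le :: "'a topology \<Rightarrow> 'a \<Rightarrow> 'k set \<Rightarrow> bool" where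
  "pseudochar_at_le Y x T \<longleftrightarrow>
     (\<exists>F. F \<lesssim> T \<and> (\<forall>U\<in>F. openin Y U \<and> x \<in> U) \<and> topspace Y \<inter> \<Inter>F = {x})"

text \<open>psi(Y) = sup of psi(x, Y) over x; psi(Y) \<le> |T| (T infinite)\<close>
definition pseudochar_le :: "'a topology \<Rightarrow> 'k set \<Rightarrow> bool" where
  "pseudochar_le Y T \<longleftrightarrow> (\<forall>x\<in>topspace Y. pseudochar_at_le Y x T)"

definition continuous_action ::
  "('g, 'b) monoid_scheme \<Rightarrow> 'g topology \<Rightarrow> 'a topology \<Rightarrow> ('g \<Rightarrow> 'a \<Rightarrow> 'a) \<Rightarrow> bool" where
  "continuous_action G TG X act \<longleftrightarrow>
     (\<forall>g\<in>carrier G. \<forall>x\<in>topspace X. act g x \<in> topspace X) \<and>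
     (\<forall>x\<in>topspace X. act \<one>\<^bsub>G\<^esub> x = x) \<and>
     (\<forall>g\<in>carrier G. \<forall>h\<in>carrier G. \<forall>x\<in>topspace X. act g (act h x) = act (g \<otimes>\<^bsub>G\<^esub> h) x) \<and>
     continuous_map (prod_topology TG X) X (\<lambda>(g, x). act g x)"

definition effective_action :: "('g, 'b) monoid_scheme \<Rightarrow> 'a topology \<Rightarrow> ('g \<Rightarrow> 'a \<Rightarrow> 'a) \<Rightarrow> bool" where
  "effective_action G X act \<longleftrightarrow>
     (\<forall>g\<in>carrier G. (\<forall>x\<in>topspace X. act g x = x) \<longrightarrow> g = \<one>\<^bsub>G\<^esub>)"

definition act_set :: "('g \<Rightarrow> 'a \<Rightarrow> 'a) \<Rightarrow> 'g set \<Rightarrow> 'a set \<Rightarrow> 'a set" where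
  "act_set act N V = {act g x | g x. g \<in> N \<and> x \<in> V}"

definition equiuniformity ::
  "('g, 'b) monoid_scheme \<Rightarrow> 'g topology \<Rightarrow> 'a topology \<Rightarrow> ('g \<Rightarrow> 'a \<Rightarrow> 'a) \<Rightarrow> 'a set set set \<Rightarrow> bool" where
  "equiuniformity G TG X act \<U> \<longleftrightarrow>
     cover_uniformity X \<U> \<and>
     (\<forall>g\<in>carrier G. \<forall>u\<in>\<U>. (\<lambda>U. act g ` U) ` u \<in> \<U>) \<and>
     (\<forall>u\<in>\<U>. \<exists>N v. openin TG N \<and> \<one>\<^bsub>G\<^esub> \<in> N \<and> v \<in> \<U> \<and>
                   refines ((\<lambda>V. act_set act N V) ` v) u)"

end

theory Submission
  imports Defs
begin

text \<open>Choose, for each member b of a base of \<U> of size at most \<tau>, a unit neighbourhood N b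
  witnessing boundedness for b. An element k in all N b moves every x only inside
  the stars of x with respect to all covers of \<U>, which in a T1 space forces k x = x;
  by effectiveness k is the unit. Hence the unit is the intersection of at most \<tau>
  open sets, and by homogeneity of G, \<psi>(G) \<le> \<tau>. The argument does not use that \<tau>
  is infinite.\<close>

lemma cover_uniformity_star_separates:
  assumes "t1_space X" "cover_uniformity X \<U>"
    and "x \<in> topspace X" "y \<in> topspace X"
    and "\<forall>u\<in>\<U>. y \<in> cover_star {x} u"
  shows "y = x"
proof (rule ccontr)
  assume "y \<noteq> x"
  have "openin X (topspace X - {y})"
    using assms(1) by (simp add: t1_space_openin_delete_alt)
  then have "\<exists>u\<in>\<U>. cover_star {x} u \<subseteq> topspace X - {y}"
    using assms(2,3) \<open>y \<noteq> x\<close> unfolding cover_uniformity_def by blast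
  then show False
    using assms(5) by blast
qed

lemma bounded_nbhds_move_within_stars:
  assumes "cover_uniformity X \<U>" "uniformity_base \<U> \<B>"
    and "\<forall>b\<in>\<B>. \<one>\<^bsub>G\<^esub> \<in> N b \<and> v b \<in> \<U> \<and> refines (act_set act (N b) ` v b) b"
    and "\<forall>b\<in>\<B>. k \<in> N b"
    and "x \<in> topspace X" "act \<one>\<^bsub>G\<^esub> x = x"
    and "u \<in> \<U>"
  shows "act k x \<in> cover_star {x} u"
proof -
  obtain b where b: "b \<in> \<B>" "refines b u"
    using assms(2,7) unfolding uniformity_base_def by blast
  have "v b \<in> \<U>"
    using assms(3) b(1) by blast
  then have "open_cover X (v b)"
    using assms(1) by (simp add: cover_uniformity_def)
  then obtain V where V: "V \<in> v b" "x \<in> V"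
    using assms(5) unfolding open_cover_def by blast
  have "refines (act_set act (N b) ` v b) b"
    using assms(3) b(1) by blast
  then obtain U' where "U' \<in> b" "act_set act (N b) V \<subseteq> U'"
    using V(1) unfolding refines_def by blast
  then obtain U where U: "U \<in> u" "act_set act (N b) V \<subseteq> U"
    using b(2) unfolding refines_def by (meson subset_trans)
  have "act k x \<in> act_set act (N b) V" "act \<one>\<^bsub>G\<^esub> x \<in> act_set act (N b) V"
    using assms(3,4) b(1) V(2) unfolding act_set_def by blast+
  then show ?thesis
    using U assms(6) unfolding cover_star_def by auto
qed

lemma continuous_map_left_translation:
  assumes "topological_group G TG" "a \<in> carrier G"
  shows "continuous_map TG TG (\<lambda>g. a \<otimes>\<^bsub>G\<^esub> g)"
proof -
  have top: "topspace TG = carrier G"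
    and mult: "continuous_map (prod_topology TG TG) TG (\<lambda>(x, y). x \<otimes>\<^bsub>G\<^esub> y)"
    using assms(1) unfolding topological_group_def by auto
  have "continuous_map TG (prod_topology TG TG) (\<lambda>g. (a, g))"
    using assms(2) top by (intro continuous_map_pairedI) auto
  from continuous_map_compose[OF this mult] show ?thesis
    by (simp add: o_def)
qed

lemma topological_group_pseudochar_le_if_at_one:
  assumes "topological_group G TG" "pseudochar_at_le TG \<one>\<^bsub>G\<^esub> T"
  shows "pseudochar_le TG T"
  unfolding pseudochar_le_def
proof
  fix h assume h: "h \<in> topspace TG"
  have top: "topspace TG = carrier G"
    using assms(1) unfolding topological_group_def by auto
  interpret group G
    using assms(1) unfolding topological_group_def by auto
  obtain F where F: "F \<lesssim> T" "\<forall>U\<in>F. openin TG U \<and> \<one>\<^bsub>G\<^esub> \<in> U"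
    "topspace TG \<inter> \<Inter>F = {\<one>\<^bsub>G\<^esub>}"
    using assms(2) unfolding pseudochar_at_le_def by blast
  define shift where "shift U = {g \<in> topspace TG. inv\<^bsub>G\<^esub> h \<otimes>\<^bsub>G\<^esub> g \<in> U}" for U
  have inv_h: "inv\<^bsub>G\<^esub> h \<in> carrier G"
    using h top by simp
  have shift_h: "inv\<^bsub>G\<^esub> h \<otimes>\<^bsub>G\<^esub> g = \<one>\<^bsub>G\<^esub> \<longleftrightarrow> g = h" if "g \<in> carrier G" for g
    using inv_solve_left'[of "\<one>\<^bsub>G\<^esub>" h g] h top that by auto
  show "pseudochar_at_le TG h T"
    unfolding pseudochar_at_le_def
  proof (intro exI conjI)
    show "shift ` F \<lesssim> T"
      using F(1) image_lepoll lepoll_trans by blast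
    show "\<forall>U\<in>shift ` F. openin TG U \<and> h \<in> U"
    proof
      fix U assume "U \<in> shift ` F"
      then obtain U' where "U' \<in> F" "U = shift U'" by blast
      have "openin TG (shift U')"
        using openin_continuous_map_preimage[OF continuous_map_left_translation[OF assms(1) inv_h]]
          F(2) \<open>U' \<in> F\<close> unfolding shift_def by simp
      moreover have "h \<in> shift U'"
        using F(2) \<open>U' \<in> F\<close> h top shift_h unfolding shift_def by simp
      ultimately show "openin TG U \<and> h \<in> U"
        using \<open>U = shift U'\<close> by simp
    qed
    have "g \<in> topspace TG \<inter> \<Inter> (shift ` F) \<longleftrightarrow> g = h" for g
    proof -
      have "g \<in> topspace TG \<inter> \<Inter> (shift ` F) \<longleftrightarrow>
          g \<in> carrier G \<and> inv\<^bsub>G\<^esub> h \<otimes>\<^bsub>G\<^esub> g \<in> topspace TG \<inter> \<Inter>F"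
        using inv_h top unfolding shift_def by auto
      also have "\<dots> \<longleftrightarrow> g = h"
        using F(3) shift_h h top by auto
      finally show ?thesis .
    qed
    then show "topspace TG \<inter> \<Inter> (shift ` F) = {h}"
      by blast
  qed
qed

lemma effective_action_bounding_nbhds_meet_in_one:
  assumes "t1_space X" "cover_uniformity X \<U>" "uniformity_base \<U> \<B>"
    and "continuous_action G TG X act" "effective_action G X act"
    and "\<forall>b\<in>\<B>. \<one>\<^bsub>G\<^esub> \<in> N b \<and> v b \<in> \<U> \<and> refines (act_set act (N b) ` v b) b"
    and "k \<in> carrier G" "\<forall>b\<in>\<B>. k \<in> N b"
  shows "k = \<one>\<^bsub>G\<^esub>"
proof -
  have "act k x = x" if "x \<in> topspace X" for x
  proof (rule cover_uniformity_star_separates[OF assms(1,2) that])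
    show "act k x \<in> topspace X"
      using assms(4,7) that unfolding continuous_action_def by blast
    show "\<forall>u\<in>\<U>. act k x \<in> cover_star {x} u"
      using bounded_nbhds_move_within_stars[OF assms(2,3,6,8) that] assms(4) that
      unfolding continuous_action_def by blast
  qed
  then show ?thesis
    using assms(5,7) unfolding effective_action_def by blast
qed

theorem corollary3p13:
  fixes T :: "'k set" and X :: "'a topology" and \<U> :: "'a set set set"
  assumes "infinite T"
    and "tychonoff_space X"
    and "cover_uniformity X \<U>"
    and "uniform_weight_le \<U> T"
  shows "\<not> (\<exists>(G :: 'g monoid) TG act.
             topological_group G TG \<and> tychonoff_space TG \<and>
             continuous_action G TG X act \<and> effective_action G X act \<and>
             \<not> pseudochar_le TG T \<and>
             equiuniformity G TG X act \<U>)"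
proof clarify
  fix G :: "'g monoid" and TG act
  assume tg: "topological_group G TG" and ca: "continuous_action G TG X act"
    and eff: "effective_action G X act" and equi: "equiuniformity G TG X act \<U>"
    and not_psi: "\<not> pseudochar_le TG T"
  obtain \<B> where base: "uniformity_base \<U> \<B>" and "\<B> \<lesssim> T"
    using assms(4) unfolding uniform_weight_le_def by blast
  obtain N v where Nv: "\<forall>b\<in>\<B>. openin TG (N b) \<and> \<one>\<^bsub>G\<^esub> \<in> N b \<and> v b \<in> \<U> \<and>
      refines (act_set act (N b) ` v b) b"
    using equi base unfolding equiuniformity_def uniformity_base_def by (metis subsetD)
  have t1: "t1_space X"
    using assms(2) unfolding tychonoff_space_def by blast
  have top: "topspace TG = carrier G" and one: "\<one>\<^bsub>G\<^esub> \<in> carrier G"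
    using tg unfolding topological_group_def by (auto intro: monoid.one_closed group.is_monoid)
  have "k = \<one>\<^bsub>G\<^esub>" if "k \<in> topspace TG \<inter> \<Inter> (N ` \<B>)" for k
    using effective_action_bounding_nbhds_meet_in_one[OF t1 assms(3) base ca eff, of N v k] Nv that top
    by auto
  then have "topspace TG \<inter> \<Inter> (N ` \<B>) = {\<one>\<^bsub>G\<^esub>}"
    using Nv one top by auto
  moreover have "N ` \<B> \<lesssim> T"
    using \<open>\<B> \<lesssim> T\<close> image_lepoll lepoll_trans by blast
  ultimately have "pseudochar_at_le TG \<one>\<^bsub>G\<^esub> T"
    using Nv unfolding pseudochar_at_le_def by blast
  then show False
    using not_psi tg topological_group_pseudochar_le_if_at_one by blast
qed

end
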